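(* Let $J=(a,b)\subseteq\mathbb R$ be an open interval (possibly unbounded) and let $A:J\to\mathbb R$ be of class $C^2$ with $A''$ not changing sign on $J$ (i.e. $A''(x)\ge0$ for all $x\in J$, or $A''(x)\le0$ for all $x\in J$). Then $\mathtt S[\mathrm{Re}K_\Gamma](\mathbf z)\ge0$ for every three-tuple $\mathbf z$ of distinct points on $\Gamma=\{x+iA(x):x\in J\}$.
   Context: $s(x)=\sqrt{1+(A'(x))^2}$. The kernel (normalizing factor $1/(2\pi)$ omitted) is $K_\Gamma(w,z)=\dfrac{A'(x)-i}{s(x)\,[\,x-y+i(A(x)-A(y))\,]}$ for $w=x+iA(x)$, $z=y+iA(y)$, $x\neq y$; $\mathrm{Re}K_\Gamma$ is its real part. For a real-valued $K$ and distinct $z_1,z_2,z_3$, $\mathtt S[K](\mathbf z)=\sum_{\sigma\in S_3}K(z_{\sigma(1)},z_{\sigma(2)})K(z_{\sigma(1)},z_{\sigma(3)})$, $S_3$ the permutation group on three elements. *)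

theory Defs
  imports "HOL-Analysis.Analysis" "HOL-Combinatorics.Permutations"
begin

definition Gamma :: "(real \<Rightarrow> real) \<Rightarrow> real set \<Rightarrow> complex set" where
  "Gamma A J = {complex_of_real x + \<i> * complex_of_real (A x) | x. x \<in> J}"

definition sfun :: "(real \<Rightarrow> real) \<Rightarrow> real \<Rightarrow> real" where
  "sfun A' x = sqrt (1 + (A' x)\<^sup>2)"

text \<open>Kernel K_Gamma(w,z) for w = x + i A(x), z = y + i A(y) (so x = Re w, y = Re z),
  normalizing factor 1/(2 pi) omitted.\<close>
definition K_Gamma :: "(real \<Rightarrow> real) \<Rightarrow> (real \<Rightarrow> real) \<Rightarrow> complex \<Rightarrow> complex \<Rightarrow> complex" where
  "K_Gamma A A' w z =
     (let x = Re w; y = Re z in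
      (complex_of_real (A' x) - \<i>) /
      (complex_of_real (sfun A' x) *
        (complex_of_real (x - y) + \<i> * complex_of_real (A x - A y))))"

definition ReK_Gamma :: "(real \<Rightarrow> real) \<Rightarrow> (real \<Rightarrow> real) \<Rightarrow> complex \<Rightarrow> complex \<Rightarrow> real" where
  "ReK_Gamma A A' w z = Re (K_Gamma A A' w z)"

definition S3 :: "('a \<Rightarrow> 'a \<Rightarrow> real) \<Rightarrow> (nat \<Rightarrow> 'a) \<Rightarrow> real" where
  "S3 K z = (\<Sum>\<sigma> \<in> {\<sigma>. \<sigma> permutes {0,1,2::nat}}.
               K (z (\<sigma> 0)) (z (\<sigma> 1)) * K (z (\<sigma> 0)) (z (\<sigma> 2)))"

end

theory Submission
  imports Defs
begin

text \<open>For w = x + i A(x) and z = y + i A(y), the real part of K_Gamma(w,z) is a positive multiple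
  of the tangent gap A'(x)(x - y) - (A(x) - A(y)). If A'' \<ge> 0 the gap is nonnegative for all
  x, y in J, if A'' \<le> 0 it is nonpositive, so Re K_Gamma has one sign on Gamma and every
  summand of S[Re K_Gamma] is a product of two factors of equal sign.\<close>

lemma Re_K_Gamma:
  "ReK_Gamma A A' w z =
     sfun A' (Re w) * (A' (Re w) * (Re w - Re z) - (A (Re w) - A (Re z))) /
     ((sfun A' (Re w))\<^sup>2 * ((Re w - Re z)\<^sup>2 + (A (Re w) - A (Re z))\<^sup>2))"
proof -
  have "Re ((complex_of_real a - \<i>) / (complex_of_real s * (complex_of_real d + \<i> * complex_of_real e)))
      = s * (a * d - e) / (s\<^sup>2 * (d\<^sup>2 + e\<^sup>2))" for a s d e :: real
    by (simp add: Re_divide power2_eq_square algebra_simps)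
  then show ?thesis
    unfolding ReK_Gamma_def K_Gamma_def Let_def .
qed

lemma ReK_Gamma_nonneg:
  assumes "A (Re w) - A (Re z) \<le> A' (Re w) * (Re w - Re z)"
  shows "ReK_Gamma A A' w z \<ge> 0"
  using assms unfolding Re_K_Gamma sfun_def by simp

lemma ReK_Gamma_nonpos:
  assumes "A' (Re w) * (Re w - Re z) \<le> A (Re w) - A (Re z)"
  shows "ReK_Gamma A A' w z \<le> 0"
  using assms unfolding Re_K_Gamma sfun_def
  by (simp add: divide_nonpos_nonneg mult_nonneg_nonpos)

lemma f''_nonpos_imp_f':
  fixes f :: "real \<Rightarrow> real"
  assumes "convex C"
    and "\<And>x. x \<in> C \<Longrightarrow> DERIV f x :> f' x"
    and "\<And>x. x \<in> C \<Longrightarrow> DERIV f' x :> f'' x"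
    and "\<And>x. x \<in> C \<Longrightarrow> f'' x \<le> 0"
    and "x \<in> C" "y \<in> C"
  shows "f y - f x \<le> f' x * (y - x)"
proof -
  have "(- f' x) * (y - x) \<le> (- f y) - (- f x)"
    by (rule f''_imp_f'[where f'' = "\<lambda>x. - f'' x"])
      (use assms in \<open>auto intro: DERIV_minus\<close>)
  then show ?thesis by simp
qed

lemma ReK_Gamma_constant_sign:
  assumes "convex J"
    and dA: "\<And>x. x \<in> J \<Longrightarrow> (A has_real_derivative A' x) (at x)"
    and dA': "\<And>x. x \<in> J \<Longrightarrow> (A' has_real_derivative A'' x) (at x)"
    and sign: "(\<forall>x\<in>J. A'' x \<ge> 0) \<or> (\<forall>x\<in>J. A'' x \<le> 0)"
  shows "(\<forall>w\<in>Gamma A J. \<forall>v\<in>Gamma A J. ReK_Gamma A A' w v \<ge> 0) \<or>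
         (\<forall>w\<in>Gamma A J. \<forall>v\<in>Gamma A J. ReK_Gamma A A' w v \<le> 0)"
proof -
  have Re_in: "Re w \<in> J" if "w \<in> Gamma A J" for w
    using that unfolding Gamma_def by auto
  from sign show ?thesis
  proof
    assume A''_nonneg: "\<forall>x\<in>J. A'' x \<ge> 0"
    have "ReK_Gamma A A' w v \<ge> 0" if "w \<in> Gamma A J" "v \<in> Gamma A J" for w v
    proof (intro ReK_Gamma_nonneg)
      have "A' (Re w) * (Re v - Re w) \<le> A (Re v) - A (Re w)"
        by (rule f''_imp_f'[OF \<open>convex J\<close> dA dA']) (use A''_nonneg Re_in that in auto)
      then show "A (Re w) - A (Re v) \<le> A' (Re w) * (Re w - Re v)"
        by (simp add: right_diff_distrib)
    qed
    then show ?thesis by blast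
  next
    assume A''_nonpos: "\<forall>x\<in>J. A'' x \<le> 0"
    have "ReK_Gamma A A' w v \<le> 0" if "w \<in> Gamma A J" "v \<in> Gamma A J" for w v
    proof (intro ReK_Gamma_nonpos)
      have "A (Re v) - A (Re w) \<le> A' (Re w) * (Re v - Re w)"
        by (rule f''_nonpos_imp_f'[OF \<open>convex J\<close> dA dA']) (use A''_nonpos Re_in that in auto)
      then show "A' (Re w) * (Re w - Re v) \<le> A (Re w) - A (Re v)"
        by (simp add: right_diff_distrib)
    qed
    then show ?thesis by blast
  qed
qed

lemma S3_nonneg_if_constant_sign:
  fixes K :: "'a \<Rightarrow> 'a \<Rightarrow> real"
  assumes z_in: "\<And>i. i \<in> {0,1,2} \<Longrightarrow> z i \<in> S"
    and sign: "(\<forall>u\<in>S. \<forall>v\<in>S. K u v \<ge> 0) \<or> (\<forall>u\<in>S. \<forall>v\<in>S. K u v \<le> 0)"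
  shows "S3 K z \<ge> 0"
  unfolding S3_def
proof (rule sum_nonneg)
  fix \<sigma> assume "\<sigma> \<in> {\<sigma>. \<sigma> permutes {0,1,2::nat}}"
  then have perm: "\<sigma> permutes {0,1,2}" by simp
  have "z (\<sigma> i) \<in> S" if "i \<in> {0,1,2}" for i
    using z_in permutes_in_image[OF perm] that by presburger
  then have z0: "z (\<sigma> 0) \<in> S" and z1: "z (\<sigma> 1) \<in> S" and z2: "z (\<sigma> 2) \<in> S"
    by simp_all
  from sign show "K (z (\<sigma> 0)) (z (\<sigma> 1)) * K (z (\<sigma> 0)) (z (\<sigma> 2)) \<ge> 0"
  proof
    assume "\<forall>u\<in>S. \<forall>v\<in>S. K u v \<ge> 0"
    with z0 z1 z2 show ?thesis by simp
  next
    assume "\<forall>u\<in>S. \<forall>v\<in>S. K u v \<le> 0"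
    with z0 z1 z2 show ?thesis by (simp add: mult_nonpos_nonpos)
  qed
qed

theorem theorem1p7:
  fixes J :: "real set" and A A' A'' :: "real \<Rightarrow> real" and z :: "nat \<Rightarrow> complex"
  assumes J_open: "open J" and J_interval: "is_interval J"
    and dA: "\<And>x. x \<in> J \<Longrightarrow> (A has_real_derivative A' x) (at x)"
    and dA': "\<And>x. x \<in> J \<Longrightarrow> (A' has_real_derivative A'' x) (at x)"
    and cA'': "continuous_on J A''"
    and sign: "(\<forall>x\<in>J. A'' x \<ge> 0) \<or> (\<forall>x\<in>J. A'' x \<le> 0)"
    and z_on: "\<And>i. i \<in> {0,1,2} \<Longrightarrow> z i \<in> Gamma A J"
    and z_distinct: "inj_on z {0,1,2}"
  shows "S3 (ReK_Gamma A A') z \<ge> 0"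
proof -
  have "convex J"
    using J_interval is_interval_convex_1 by blast
  then have "(\<forall>w\<in>Gamma A J. \<forall>v\<in>Gamma A J. ReK_Gamma A A' w v \<ge> 0) \<or>
             (\<forall>w\<in>Gamma A J. \<forall>v\<in>Gamma A J. ReK_Gamma A A' w v \<le> 0)"
    using dA dA' sign by (rule ReK_Gamma_constant_sign)
  then show ?thesis
    using z_on by (rule S3_nonneg_if_constant_sign[rotated])
qed

end
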